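(* Let $(M,d)$ be a metric space, $A\subseteq M$ finite and $\beta>0$. For all $r,k>0$: (i) $\mathrm{Cr}^\beta_{r,k}(A)\subseteq\mathrm{Cov}_{(1+\beta^{-1})r,k}(A)$, and (ii) $\mathrm{Cov}_{r,k}(A)\subseteq\mathrm{Cr}^\beta_{\max\{1,2\beta\}r,k}(A)$.
   Context: $\bar B_d(x,r)=\{y\in M:d(x,y)\le r\}$. For finite $A\subseteq M$, $k>0$, $x\in M$, the $k$-core distance $\mathrm{core}^A_k(x)\in[0,\infty]$ is the distance from $x$ to its $\lceil k\rceil$-th nearest neighbor in $A$ (each point of $A$ counted once, $x$ itself counting if $x\in A$); equivalently $\mathrm{core}^A_k(x)=\min\{r\ge0:|\bar B_d(x,r)\cap A|\ge k\}$, and it is $\infty$ if $k>|A|$. The multicover bifiltration is $\mathrm{Cov}_{r,k}(A)=\{x\in M:|\bar B_d(x,r)\cap A|\ge k\}$. For $\beta>0$, $\Lambda^\beta_k(a,x)=\max\{\beta\,\mathrm{core}^A_k(a),d(a,x)\}$ ($a\in A$, $x\in M$), $B^\beta_{r,k}(a)=\{x\in M:\Lambda^\beta_k(a,x)\le r\}$, and the core bifiltration is $\mathrm{Cr}^\beta_{r,k}(A)=\bigcup_{a\in A}B^\beta_{r,k}(a)$. *)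

theory Defs
  imports "HOL-Analysis.Analysis" "HOL-Library.Extended_Real"
begin

text \<open>Closed ball: cball x r = {y. dist x y \<le> r} (library).
  k-core distance, valued in [0,\<infinity>] (infinite if fewer than k points of A):
  core A k x = min {r \<ge> 0 : |cball x r \<inter> A| \<ge> k}.\<close>

definition core_dist :: "'a::metric_space set \<Rightarrow> real \<Rightarrow> 'a \<Rightarrow> ereal" where
  "core_dist A k x = Inf {ereal r | r. r \<ge> 0 \<and> real (card (cball x r \<inter> A)) \<ge> k}"

definition multicover :: "'a::metric_space set \<Rightarrow> real \<Rightarrow> real \<Rightarrow> 'a set" where
  "multicover A r k = {x. real (card (cball x r \<inter> A)) \<ge> k}"

definition core_lambda :: "'a::metric_space set \<Rightarrow> real \<Rightarrow> real \<Rightarrow> 'a \<Rightarrow> 'a \<Rightarrow> ereal" where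
  "core_lambda A \<beta> k a x = max (ereal \<beta> * core_dist A k a) (ereal (dist a x))"

definition core_ball :: "'a::metric_space set \<Rightarrow> real \<Rightarrow> real \<Rightarrow> real \<Rightarrow> 'a \<Rightarrow> 'a set" where
  "core_ball A \<beta> r k a = {x. core_lambda A \<beta> k a x \<le> ereal r}"

definition core_bifiltration :: "'a::metric_space set \<Rightarrow> real \<Rightarrow> real \<Rightarrow> real \<Rightarrow> 'a set" where
  "core_bifiltration A \<beta> r k = (\<Union>a\<in>A. core_ball A \<beta> r k a)"

end

theory Submission
  imports Defs
begin

text \<open>Part (i): a point x in the core ball of a \<in> A has dist a x \<le> r, and the ball of radius
  r/\<beta> around a already holds k points of A; the triangle inequality puts all of them within
  (1 + 1/\<beta>) r of x.
  Part (ii): if cball x r holds k points of A, pick one of them, a; then cball a (2 r)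
  contains cball x r, so core_k(a) \<le> 2 r, and both terms of \<Lambda>(a, x) are at most
  max 1 (2 \<beta>) r.\<close>

lemma card_cball_inter_mono:
  assumes "finite A" "cball x s \<subseteq> cball y t"
  shows "card (cball x s \<inter> A) \<le> card (cball y t \<inter> A)"
  using assms by (intro card_mono) auto

lemma cball_subset_cball_triangle:
  fixes x y :: "'a::metric_space"
  assumes "dist x y + s \<le> t"
  shows "cball y s \<subseteq> cball x t"
proof
  fix z assume "z \<in> cball y s"
  with dist_triangle[of x z y] assms show "z \<in> cball x t" by simp
qed

lemma finite_cball_inter_gap:
  fixes a :: "'a::metric_space"
  assumes "finite A"
  obtains e where "e > 0" "cball a (c + e) \<inter> A = cball a c \<inter> A"
proof -
  define D where "D = insert 1 ((\<lambda>y. dist a y - c) ` {y\<in>A. dist a y > c})"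
  have "finite D" "\<forall>d\<in>D. d > 0"
    using assms unfolding D_def by auto
  then have "Min D > 0"
    by (simp add: D_def)
  have "cball a (Min D / 2 + c) \<inter> A \<subseteq> cball a c \<inter> A"
  proof
    fix y assume y: "y \<in> cball a (Min D / 2 + c) \<inter> A"
    show "y \<in> cball a c \<inter> A"
    proof (rule ccontr)
      assume "y \<notin> cball a c \<inter> A"
      with y have "dist a y - c \<in> D"
        unfolding D_def by auto
      with \<open>finite D\<close> have "Min D \<le> dist a y - c"
        by simp
      with y \<open>Min D > 0\<close> show False
        by auto
    qed
  qed
  with \<open>Min D > 0\<close> show ?thesis
    by (intro that[of "Min D / 2"]) (auto simp: add.commute)
qed

lemma core_dist_nonneg: "core_dist A k a \<ge> 0"
  unfolding core_dist_def by (rule Inf_greatest) auto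

text \<open>The infimum in core_dist is attained because A is finite.\<close>
lemma core_dist_le_iff:
  assumes "finite A" "s \<ge> 0"
  shows "core_dist A k a \<le> ereal s \<longleftrightarrow> k \<le> real (card (cball a s \<inter> A))"
proof
  assume "k \<le> real (card (cball a s \<inter> A))"
  with assms(2) show "core_dist A k a \<le> ereal s"
    unfolding core_dist_def by (intro Inf_lower) auto
next
  assume "core_dist A k a \<le> ereal s"
  obtain e where e: "e > 0" "cball a (s + e) \<inter> A = cball a s \<inter> A"
    using finite_cball_inter_gap[OF assms(1)] .
  with \<open>core_dist A k a \<le> ereal s\<close> have "core_dist A k a < ereal (s + e)"
    by (simp add: le_less_trans)
  then obtain t where t: "k \<le> real (card (cball a t \<inter> A))" "t < s + e"
    unfolding core_dist_def by (auto simp: Inf_less_iff)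
  have "card (cball a t \<inter> A) \<le> card (cball a (s + e) \<inter> A)"
    using t(2) by (intro card_cball_inter_mono[OF assms(1)]) auto
  with t(1) e(2) show "k \<le> real (card (cball a s \<inter> A))"
    by simp
qed

lemma core_dist_le_div:
  assumes "\<beta> > 0" "ereal \<beta> * core_dist A k a \<le> ereal r"
  shows "core_dist A k a \<le> ereal (r / \<beta>)"
proof (cases "core_dist A k a")
  case (real c)
  with assms show ?thesis
    by (simp add: field_simps)
next
  case PInf
  with assms show ?thesis
    by simp
next
  case MInf
  with core_dist_nonneg[of A k a] show ?thesis
    by simp
qed

lemma core_bifiltration_subset_multicover:
  assumes "finite A" "\<beta> > 0"
  shows "core_bifiltration A \<beta> r k \<subseteq> multicover A ((1 + 1 / \<beta>) * r) k"
proof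
  fix x assume "x \<in> core_bifiltration A \<beta> r k"
  then obtain a where "a \<in> A" and core: "ereal \<beta> * core_dist A k a \<le> ereal r"
    and dist: "dist a x \<le> r"
    unfolding core_bifiltration_def core_ball_def core_lambda_def by auto
  have "r \<ge> 0"
    using dist zero_le_dist order_trans by blast
  with assms(2) have "r / \<beta> \<ge> 0"
    by simp
  have "k \<le> real (card (cball a (r / \<beta>) \<inter> A))"
    using core_dist_le_div[OF assms(2) core] core_dist_le_iff[OF assms(1) \<open>r / \<beta> \<ge> 0\<close>] by blast
  also have "\<dots> \<le> card (cball x ((1 + 1 / \<beta>) * r) \<inter> A)"
    using dist by (intro of_nat_mono card_cball_inter_mono[OF assms(1)] cball_subset_cball_triangle)
      (simp add: dist_commute algebra_simps)
  finally show "x \<in> multicover A ((1 + 1 / \<beta>) * r) k"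
    unfolding multicover_def by simp
qed

lemma multicover_subset_core_bifiltration:
  assumes "finite A" "\<beta> > 0" "r \<ge> 0" "k > 0"
  shows "multicover A r k \<subseteq> core_bifiltration A \<beta> (max 1 (2 * \<beta>) * r) k"
proof
  fix x assume "x \<in> multicover A r k"
  then have cover: "k \<le> real (card (cball x r \<inter> A))"
    unfolding multicover_def by simp
  with \<open>k > 0\<close> have "cball x r \<inter> A \<noteq> {}"
    by auto
  then obtain a where "a \<in> A" and dist: "dist x a \<le> r"
    by auto
  have "card (cball x r \<inter> A) \<le> card (cball a (2 * r) \<inter> A)"
    using dist by (intro card_cball_inter_mono[OF assms(1)] cball_subset_cball_triangle)
      (simp add: dist_commute)
  with cover assms(1,3) have "core_dist A k a \<le> ereal (2 * r)"
    by (subst core_dist_le_iff) auto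
  with assms(2) have "ereal \<beta> * core_dist A k a \<le> ereal (2 * \<beta> * r)"
    using ereal_mult_left_mono[of "core_dist A k a" "ereal (2 * r)" "ereal \<beta>"]
    by (simp add: mult_ac)
  also have "\<dots> \<le> ereal (max 1 (2 * \<beta>) * r)"
    using assms(3) by (simp add: mult_right_mono)
  finally have "ereal \<beta> * core_dist A k a \<le> ereal (max 1 (2 * \<beta>) * r)" .
  moreover have "dist a x \<le> max 1 (2 * \<beta>) * r"
    using dist assms(3) mult_right_mono[of 1 "max 1 (2 * \<beta>)" r] by (simp add: dist_commute)
  ultimately show "x \<in> core_bifiltration A \<beta> (max 1 (2 * \<beta>) * r) k"
    using \<open>a \<in> A\<close> unfolding core_bifiltration_def core_ball_def core_lambda_def by auto
qed

theorem mainTheorem3: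
  fixes A :: "'a::metric_space set" and \<beta> r k :: real
  assumes "finite A" and "\<beta> > 0" and "r > 0" and "k > 0"
  shows "core_bifiltration A \<beta> r k \<subseteq> multicover A ((1 + 1 / \<beta>) * r) k
         \<and> multicover A r k \<subseteq> core_bifiltration A \<beta> (max 1 (2 * \<beta>) * r) k"
  using core_bifiltration_subset_multicover[OF assms(1,2)]
    multicover_subset_core_bifiltration[OF assms(1,2) _ assms(4)] assms(3) by simp

end
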